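(* Let $\mathbf{F}\in[L^2(\mathbb{R}^2)]^2$ be supported in the bounded domain $\Omega$. Let $\tau_1\in\mathbb{C}\setminus\{0\}$, let $\mathbf{z}_0\neq\mathbf{z}_1$ be two points in $\mathbb{R}^2\setminus\overline{\Omega}$, and fix $\mathbf{q}\in\mathbb{S}$. Then $\mathbf{F}$ is uniquely determined (among sources supported in $\Omega$) by the two phaseless data sets $$\mathcal{B}_p=\{|u^\infty_{\mathbf{F}\cup\{\mathbf{z}\},p}(\hat{\mathbf{x}},\mathbf{q},\omega,\tau)|:\ \hat{\mathbf{x}}\in\mathbb{S}_{\mathbf{q}},\ \omega\in\mathbb{W},\ \tau\in\{0,\tau_1\},\ \mathbf{z}\in\{\mathbf{z}_0,\mathbf{z}_1\}\}$$ and $$\mathcal{B}_s=\{|u^\infty_{\mathbf{F}\cup\{\mathbf{z}\},s}(\hat{\mathbf{x}},\mathbf{q},\omega,\tau)|:\ \hat{\mathbf{x}}\in\mathbb{S}^\perp_{\mathbf{q}},\ \omega\in\mathbb{W},\ \tau\in\{0,\tau_1\},\ \mathbf{z}\in\{\mathbf{z}_0,\mathbf{z}_1\}\}.$$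
   Context: $\mathbb{W}=(\omega_{min},\omega_{max})$, $0<\omega_{min}<\omega_{max}$; Lamé constants $\mu>0$, $2\mu+\lambda>0$; $k_p=\omega/\sqrt{\lambda+2\mu}$, $k_s=\omega/\sqrt\mu$. $\mathbb{S}$ is the unit circle; $\hat{\mathbf{x}}^\perp$ is $\hat{\mathbf{x}}$ rotated anticlockwise by $\pi/2$. $\mathbb{S}_{\mathbf{q}}=\{\hat{\mathbf{x}}\in\mathbb{S}:\mathbf{q}\cdot\hat{\mathbf{x}}\ge 1/2\}$, $\mathbb{S}^\perp_{\mathbf{q}}=\{\hat{\mathbf{x}}\in\mathbb{S}:\mathbf{q}\cdot\hat{\mathbf{x}}^\perp\ge 1/2\}$. Source far fields: $u^\infty_{\mathbf{F},p}(\hat{\mathbf{x}},\omega)=\int_{\mathbb{R}^2}e^{-ik_p\hat{\mathbf{x}}\cdot\mathbf{y}}\hat{\mathbf{x}}\cdot\mathbf{F}(\mathbf{y})d\mathbf{y}$, $u^\infty_{\mathbf{F},s}(\hat{\mathbf{x}},\omega)=\int_{\mathbb{R}^2}e^{-ik_s\hat{\mathbf{x}}\cdot\mathbf{y}}\hat{\mathbf{x}}^\perp\cdot\mathbf{F}(\mathbf{y})d\mathbf{y}$. With an added point source at $\mathbf{z}$ of strength $\tau$ and polarization $\mathbf{q}$, the far fields are $u^\infty_{\mathbf{F}\cup\{\mathbf{z}\},p}(\hat{\mathbf{x}},\mathbf{q},\omega,\tau)=u^\infty_{\mathbf{F},p}(\hat{\mathbf{x}},\omega)+\tau e^{-ik_p\hat{\mathbf{x}}\cdot\mathbf{z}}\,\mathbf{q}\cdot\hat{\mathbf{x}}$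 and $u^\infty_{\mathbf{F}\cup\{\mathbf{z}\},s}(\hat{\mathbf{x}},\mathbf{q},\omega,\tau)=u^\infty_{\mathbf{F},s}(\hat{\mathbf{x}},\omega)+\tau e^{-ik_s\hat{\mathbf{x}}\cdot\mathbf{z}}\,\mathbf{q}\cdot\hat{\mathbf{x}}^\perp$. *)

theory Defs
  imports "HOL-Analysis.Analysis"
begin

definition perp2 :: "real^2 \<Rightarrow> real^2" where
  "perp2 x = vector [- (x$2), x$1]"

definition cdot :: "real^2 \<Rightarrow> complex^2 \<Rightarrow> complex" where
  "cdot x v = of_real (x$1) * v$1 + of_real (x$2) * v$2"

definition unit_circle :: "(real^2) set" where
  "unit_circle = {x. norm x = 1}"

definition S_q :: "real^2 \<Rightarrow> (real^2) set" where
  "S_q q = {x \<in> unit_circle. q \<bullet> x \<ge> 1/2}"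

definition S_q_perp :: "real^2 \<Rightarrow> (real^2) set" where
  "S_q_perp q = {x \<in> unit_circle. q \<bullet> perp2 x \<ge> 1/2}"

definition k_p :: "real \<Rightarrow> real \<Rightarrow> real \<Rightarrow> real" where
  "k_p lam mu \<omega> = \<omega> / sqrt (lam + 2 * mu)"

definition k_s :: "real \<Rightarrow> real \<Rightarrow> real" where
  "k_s mu \<omega> = \<omega> / sqrt mu"

definition farfield_p :: "real \<Rightarrow> real \<Rightarrow> (real^2 \<Rightarrow> complex^2) \<Rightarrow> real^2 \<Rightarrow> real \<Rightarrow> complex" where
  "farfield_p lam mu F xh \<omega> =
     (LINT y|lborel. cis (- k_p lam mu \<omega> * (xh \<bullet> y)) * cdot xh (F y))"

definition farfield_s :: "real \<Rightarrow> (real^2 \<Rightarrow> complex^2) \<Rightarrow> real^2 \<Rightarrow> real \<Rightarrow> complex" where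
  "farfield_s mu F xh \<omega> =
     (LINT y|lborel. cis (- k_s mu \<omega> * (xh \<bullet> y)) * cdot (perp2 xh) (F y))"

text \<open>Far fields with an added point source at z of strength tau and polarization q.\<close>

definition farfield_pt_p :: "real \<Rightarrow> real \<Rightarrow> (real^2 \<Rightarrow> complex^2) \<Rightarrow> real^2 \<Rightarrow>
    real^2 \<Rightarrow> real^2 \<Rightarrow> real \<Rightarrow> complex \<Rightarrow> complex" where
  "farfield_pt_p lam mu F z xh q \<omega> \<tau> =
     farfield_p lam mu F xh \<omega> + \<tau> * cis (- k_p lam mu \<omega> * (xh \<bullet> z)) * of_real (q \<bullet> xh)"

definition farfield_pt_s :: "real \<Rightarrow> (real^2 \<Rightarrow> complex^2) \<Rightarrow> real^2 \<Rightarrow>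
    real^2 \<Rightarrow> real^2 \<Rightarrow> real \<Rightarrow> complex \<Rightarrow> complex" where
  "farfield_pt_s mu F z xh q \<omega> \<tau> =
     farfield_s mu F xh \<omega> + \<tau> * cis (- k_s mu \<omega> * (xh \<bullet> z)) * of_real (q \<bullet> perp2 xh)"

definition L2_source_in :: "(real^2) set \<Rightarrow> (real^2 \<Rightarrow> complex^2) \<Rightarrow> bool" where
  "L2_source_in \<Omega> F \<longleftrightarrow>
     (\<forall>j. (\<lambda>y. F y $ j) \<in> borel_measurable lborel \<and>
          integrable lborel (\<lambda>y. (norm (F y $ j))^2)) \<and>
     (\<forall>y. y \<notin> \<Omega> \<longrightarrow> F y = 0)"

definition bounded_domain :: "(real^2) set \<Rightarrow> bool" where
  "bounded_domain \<Omega> \<longleftrightarrow> open \<Omega> \<and> connected \<Omega> \<and> bounded \<Omega> \<and> \<Omega> \<noteq> {}"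

end

(* Along a direction xh, the far field of a source as a function of the wave number is the
   Fourier transform of one component of the source (along xh for P-waves, along xh perp for
   S-waves).  Its modulus and the moduli of its sums with the two reference point sources
   determine it by three-moduli phase retrieval wherever sin (k xh.(z0 - z1)) is nonzero, which
   holds on an open subinterval of the band.  The Fourier transform of a compactly supported
   function is entire, so all moments along xh of that component vanish.  Writing the
   directions as q + s q perp, the P-data (|s| <= 1) and the S-data (s <= -1) give two
   polynomial identities in s whose combination yields every moment of both components in the
   frame (q, q perp); a compactly supported function whose polynomial moments vanish is zero
   almost everywhere, by Stone-Weierstrass. *)

theory Submission
  imports Defs "HOL-Complex_Analysis.Complex_Analysis"
begin

section \<open>Phase retrieval\<close>

lemma Re_mult_cnj_eq_if_cmod_eq:
  fixes u v b :: complex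
  assumes "cmod u = cmod v" and "cmod (u + b) = cmod (v + b)"
  shows "Re (u * cnj b) = Re (v * cnj b)"
proof -
  have "Re u ^ 2 + Im u ^ 2 = Re v ^ 2 + Im v ^ 2"
    and "(Re u + Re b) ^ 2 + (Im u + Im b) ^ 2 = (Re v + Re b) ^ 2 + (Im v + Im b) ^ 2"
    using assms by (metis cmod_power2 plus_complex.sel)+
  then show ?thesis
    by (simp add: power2_eq_square algebra_simps)
qed

lemma phase_retrieval_three_moduli:
  fixes u v a :: complex and \<theta> :: real
  assumes "cmod u = cmod v" and "cmod (u + a) = cmod (v + a)"
    and "cmod (u + a * cis \<theta>) = cmod (v + a * cis \<theta>)"
    and "a \<noteq> 0" and "sin \<theta> \<noteq> 0"
  shows "u = v"
proof -
  define w where "w = (u - v) * cnj a"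
  have "Re w = 0"
    using Re_mult_cnj_eq_if_cmod_eq[OF assms(1,2)] by (simp add: w_def algebra_simps)
  moreover have "Re (w * cis (- \<theta>)) = 0"
    using Re_mult_cnj_eq_if_cmod_eq[OF assms(1,3)]
    by (simp add: w_def cis_cnj algebra_simps)
  ultimately have "w = 0"
    using \<open>sin \<theta> \<noteq> 0\<close> by (simp add: complex_eq_iff)
  then show ?thesis
    using \<open>a \<noteq> 0\<close> by (simp add: w_def)
qed

lemma phase_retrieval_two_point_sources:
  fixes u v \<tau>1 c :: complex and t :: real and x z0 z1 :: "real^2"
  assumes "\<tau>1 \<noteq> 0" and "c \<noteq> 0" and "sin (t * (x \<bullet> (z0 - z1))) \<noteq> 0"
    and data: "\<forall>\<tau> \<in> {0, \<tau>1}. \<forall>z \<in> {z0, z1}.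
      cmod (u + \<tau> * cis (- t * (x \<bullet> z)) * c) = cmod (v + \<tau> * cis (- t * (x \<bullet> z)) * c)"
  shows "u = v"
proof (rule phase_retrieval_three_moduli)
  let ?a = "\<tau>1 * cis (- t * (x \<bullet> z0)) * c"
  show "cmod u = cmod v" and "cmod (u + ?a) = cmod (v + ?a)"
    using data by auto
  have rotate: "?a * cis (t * (x \<bullet> (z0 - z1))) = \<tau>1 * cis (- t * (x \<bullet> z1)) * c"
    by (simp add: cis_mult inner_diff_right algebra_simps)
  show "cmod (u + ?a * cis (t * (x \<bullet> (z0 - z1)))) = cmod (v + ?a * cis (t * (x \<bullet> (z0 - z1))))"
    unfolding rotate using data by auto
qed (use assms in auto)

lemma exists_interval_sin_mult_nonzero:
  fixes a b c :: real
  assumes "a < b" and "c \<noteq> 0"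
  obtains t0 \<epsilon> where "\<epsilon> > 0" and "ball t0 \<epsilon> \<subseteq> {a<..<b} \<inter> {t. sin (t * c) \<noteq> 0}"
proof -
  have "{a<..<b} \<inter> {t. sin (t * c) = 0} \<subseteq> (\<lambda>i. of_int i * pi / c) ` \<int>"
  proof
    fix t assume "t \<in> {a<..<b} \<inter> {t. sin (t * c) = 0}"
    then obtain i :: int where "t * c = of_int i * pi"
      by (auto simp: sin_zero_iff_int2)
    then show "t \<in> (\<lambda>i. of_int i * pi / c) ` \<int>"
      using \<open>c \<noteq> 0\<close> by (auto simp: Ints_def field_simps)
  qed
  then have "countable ({a<..<b} \<inter> {t. sin (t * c) = 0})"
    by (rule countable_subset) (simp add: countable_int)
  moreover have "uncountable {a<..<b}"
    using \<open>a < b\<close> by (simp add: uncountable_open_interval)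
  ultimately have "\<not> {a<..<b} \<subseteq> {t. sin (t * c) = 0}"
    by (metis Int_absorb2)
  then obtain t1 where t1: "t1 \<in> {a<..<b} \<inter> {t. sin (t * c) \<noteq> 0}"
    by blast
  have "open ({a<..<b} \<inter> {t. sin (t * c) \<noteq> 0})"
    by (intro open_Int open_greaterThanLessThan open_Collect_neq continuous_intros)
  with t1 show ?thesis
    using that by (meson openE)
qed

section \<open>Fourier transforms of compactly supported functions\<close>

lemma has_field_derivative_integral_dominated:
  fixes f f' :: "complex \<Rightarrow> 'a \<Rightarrow> complex" and g :: "'a \<Rightarrow> real"
  assumes der: "\<And>w y. ((\<lambda>w. f w y) has_field_derivative f' w y) (at w)"
    and int: "\<And>w. integrable M (f w)"
    and meas: "f' w0 \<in> borel_measurable M"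
    and g: "integrable M g"
    and bound: "\<And>w y. w \<in> ball w0 r \<Longrightarrow> norm (f' w y) \<le> g y"
    and "r > 0"
  shows "((\<lambda>w. integral\<^sup>L M (f w)) has_field_derivative integral\<^sup>L M (f' w0)) (at w0)"
  unfolding has_field_derivative_iff
proof (subst tendsto_at_iff_sequentially, intro allI impI, unfold comp_def)
  have lipschitz: "norm (f w y - f w0 y) \<le> g y * norm (w - w0)" if "w \<in> ball w0 r" for w y
    by (rule field_differentiable_bound[where S="ball w0 r" and f="\<lambda>w. f w y" and f'="\<lambda>w. f' w y"])
       (use that \<open>r > 0\<close> bound der in \<open>auto intro: has_field_derivative_at_within\<close>)
  fix X :: "nat \<Rightarrow> complex"
  assume X: "\<forall>i. X i \<in> UNIV - {w0}" and "X \<longlonglongrightarrow> w0"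
  then obtain N where N: "\<And>n. n \<ge> N \<Longrightarrow> dist (X n) w0 < r"
    using \<open>r > 0\<close> unfolding lim_sequentially by blast
  define Y where "Y n = X (n + N)" for n
  have Y_ball: "Y n \<in> ball w0 r" and Y_ne: "Y n \<noteq> w0" for n
    using N[of "n + N"] X by (auto simp: Y_def dist_commute)
  have "Y \<longlonglongrightarrow> w0"
    unfolding Y_def by (rule LIMSEQ_ignore_initial_segment) fact
  have "(\<lambda>n. integral\<^sup>L M (\<lambda>y. (f (Y n) y - f w0 y) / (Y n - w0))) \<longlonglongrightarrow> integral\<^sup>L M (f' w0)"
  proof (rule integral_dominated_convergence[where w=g])
    show "(\<lambda>y. (f (Y n) y - f w0 y) / (Y n - w0)) \<in> borel_measurable M" for n
      using int by measurable
    show "AE y in M. (\<lambda>n. (f (Y n) y - f w0 y) / (Y n - w0)) \<longlonglongrightarrow> f' w0 y"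
    proof (rule AE_I2)
      fix y
      have "((\<lambda>w. (f w y - f w0 y) / (w - w0)) \<longlongrightarrow> f' w0 y) (at w0)"
        using der[of y w0] unfolding has_field_derivative_iff .
      then show "(\<lambda>n. (f (Y n) y - f w0 y) / (Y n - w0)) \<longlonglongrightarrow> f' w0 y"
        using \<open>Y \<longlonglongrightarrow> w0\<close> Y_ne unfolding tendsto_at_iff_sequentially comp_def by auto
    qed
    show "AE y in M. norm ((f (Y n) y - f w0 y) / (Y n - w0)) \<le> g y" for n
      using lipschitz[OF Y_ball] Y_ne by (auto simp: norm_divide divide_le_eq)
  qed (use meas g in auto)
  moreover have quotient_eq: "integral\<^sup>L M (\<lambda>y. (f (Y n) y - f w0 y) / (Y n - w0)) =
      (integral\<^sup>L M (f (Y n)) - integral\<^sup>L M (f w0)) / (Y n - w0)" for n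
    using int Y_ne by simp
  ultimately have "(\<lambda>n. (integral\<^sup>L M (f (Y n)) - integral\<^sup>L M (f w0)) / (Y n - w0)) \<longlonglongrightarrow> integral\<^sup>L M (f' w0)"
    by (simp only: quotient_eq)
  then show "(\<lambda>n. (integral\<^sup>L M (f (X n)) - integral\<^sup>L M (f w0)) / (X n - w0)) \<longlonglongrightarrow> integral\<^sup>L M (f' w0)"
    unfolding Y_def by (rule LIMSEQ_offset)
qed

lemma norm_power_mult_exp_le:
  fixes w :: complex and a C R :: real
  assumes "\<bar>a\<bar> \<le> C" and "norm w \<le> R"
  shows "norm ((- \<i> * of_real a) ^ n * exp (- \<i> * w * of_real a)) \<le> C ^ n * exp (R * C)"
proof -
  have "C \<ge> 0"
    using assms by linarith
  have "Re (- \<i> * w * of_real a) \<le> \<bar>Im w\<bar> * \<bar>a\<bar>"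
    by (simp add: abs_mult[symmetric])
  also have "\<dots> \<le> R * C"
    using assms abs_Im_le_cmod[of w] by (intro mult_mono) auto
  finally have "norm (exp (- \<i> * w * of_real a)) \<le> exp (R * C)"
    by (simp add: norm_exp)
  moreover have "norm ((- \<i> * of_real a) ^ n) \<le> C ^ n"
    using assms by (simp add: norm_power norm_mult power_mono)
  moreover note \<open>C \<ge> 0\<close>
  ultimately show ?thesis
    unfolding norm_mult by (intro mult_mono) auto
qed

definition fourier_transform_deriv :: "'a measure \<Rightarrow> ('a \<Rightarrow> real) \<Rightarrow> ('a \<Rightarrow> complex) \<Rightarrow> nat \<Rightarrow> complex \<Rightarrow> complex"
  where "fourier_transform_deriv M a h n w =
    (\<integral>y. (- \<i> * of_real (a y)) ^ n * exp (- \<i> * w * of_real (a y)) * h y \<partial>M)"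

lemma has_field_derivative_fourier_transform_deriv:
  fixes a :: "'a \<Rightarrow> real" and h :: "'a \<Rightarrow> complex"
  assumes h: "integrable M h" and a: "a \<in> borel_measurable M"
    and C: "\<And>y. h y \<noteq> 0 \<Longrightarrow> \<bar>a y\<bar> \<le> C"
  shows "(fourier_transform_deriv M a h n has_field_derivative fourier_transform_deriv M a h (Suc n) w) (at w)"
proof -
  have bound: "norm ((- \<i> * of_real (a y)) ^ n * exp (- \<i> * w * of_real (a y)) * h y)
      \<le> C ^ n * exp (R * C) * norm (h y)" if "norm w \<le> R" for n w R y
  proof (cases "h y = 0")
    case False
    then have "norm ((- \<i> * of_real (a y)) ^ n * exp (- \<i> * w * of_real (a y))) \<le> C ^ n * exp (R * C)"
      using C that by (intro norm_power_mult_exp_le)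
    then show ?thesis
      unfolding norm_mult[of _ "h y"] by (intro mult_right_mono) auto
  qed simp
  have integrable: "integrable M (\<lambda>y. (- \<i> * of_real (a y)) ^ n * exp (- \<i> * w * of_real (a y)) * h y)"
    for n w
  proof (rule Bochner_Integration.integrable_bound[where f="\<lambda>y. C ^ n * exp (norm w * C) * norm (h y)"])
    show "AE y in M. norm ((- \<i> * of_real (a y)) ^ n * exp (- \<i> * w * of_real (a y)) * h y)
        \<le> norm (C ^ n * exp (norm w * C) * norm (h y))"
      unfolding real_norm_def by (intro AE_I2 order_trans[OF bound[OF order_refl] abs_ge_self])
  qed (use h a in auto)
  show ?thesis
    unfolding fourier_transform_deriv_def
  proof (rule has_field_derivative_integral_dominated[where r=1 and
        g="\<lambda>y. C ^ Suc n * exp ((norm w + 1) * C) * norm (h y)"])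
    show "((\<lambda>w. (- \<i> * of_real (a y)) ^ n * exp (- \<i> * w * of_real (a y)) * h y) has_field_derivative
        (- \<i> * of_real (a y)) ^ Suc n * exp (- \<i> * w' * of_real (a y)) * h y) (at w')" for w' y
      by (auto intro!: derivative_eq_intros simp: algebra_simps)
    show "norm ((- \<i> * of_real (a y)) ^ Suc n * exp (- \<i> * w' * of_real (a y)) * h y)
        \<le> C ^ Suc n * exp ((norm w + 1) * C) * norm (h y)" if "w' \<in> ball w 1" for w' y
      using that norm_triangle_sub[of w' w] by (intro bound) (auto simp: dist_norm norm_minus_commute)
    show "(\<lambda>y. (- \<i> * of_real (a y)) ^ Suc n * exp (- \<i> * w * of_real (a y)) * h y) \<in> borel_measurable M"
      using integrable by (rule borel_measurable_integrable)
  qed (use integrable h in auto)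
qed

lemma moments_zero_if_fourier_zero_on_ball:
  fixes a :: "'a \<Rightarrow> real" and h :: "'a \<Rightarrow> complex"
  assumes h: "integrable M h" and a: "a \<in> borel_measurable M"
    and C: "\<And>y. h y \<noteq> 0 \<Longrightarrow> \<bar>a y\<bar> \<le> C"
    and "\<epsilon> > 0"
    and zero: "\<And>t. t \<in> ball t0 \<epsilon> \<Longrightarrow> (\<integral>y. exp (- \<i> * of_real t * of_real (a y)) * h y \<partial>M) = 0"
  shows "(\<integral>y. of_real (a y ^ n) * h y \<partial>M) = 0"
proof -
  let ?\<Phi> = "fourier_transform_deriv M a h"
  note D = has_field_derivative_fourier_transform_deriv[OF h a C]
  have holomorphic: "?\<Phi> 0 holomorphic_on UNIV"
    using D[of 0] by (auto simp: holomorphic_on_def field_differentiable_def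
        intro: has_field_derivative_at_within)
  have limit_point: "of_real t0 islimpt complex_of_real ` ball t0 \<epsilon>"
    by (intro islimpt_isCont_image continuous_intros)
       (use \<open>\<epsilon> > 0\<close> in \<open>auto simp: islimpt_ball eventually_at_filter\<close>)
  have "?\<Phi> 0 w = 0" for w
    by (rule analytic_continuation[OF holomorphic open_UNIV connected_UNIV subset_UNIV UNIV_I limit_point])
       (use zero in \<open>auto simp: fourier_transform_deriv_def\<close>)
  then have "?\<Phi> n = (\<lambda>_. 0)" for n
  proof (induction n)
    case (Suc n)
    then show ?case
      using D[of n] DERIV_unique[OF _ DERIV_const] by fastforce
  qed auto
  moreover have "?\<Phi> n 0 = (\<integral>y. (- \<i>) ^ n * (of_real (a y ^ n) * h y) \<partial>M)"
    unfolding fourier_transform_deriv_def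
    by (intro Bochner_Integration.integral_cong) (auto simp: power_mult_distrib[symmetric])
  ultimately show ?thesis
    by simp
qed

section \<open>Functions with vanishing polynomial moments\<close>

lemma continuous_on_real_polynomial_function:
  "real_polynomial_function g \<Longrightarrow> continuous_on S g"
  by (simp add: continuous_on_polymonial_function real_polynomial_function_eq)

lemma integrable_mult_bounded_on_support:
  fixes f g :: "'a \<Rightarrow> complex"
  assumes f: "integrable M f" and g: "g \<in> borel_measurable M"
    and B: "\<And>y. f y \<noteq> 0 \<Longrightarrow> norm (g y) \<le> B"
  shows "integrable M (\<lambda>y. g y * f y)"
proof (rule Bochner_Integration.integrable_bound[where f="\<lambda>y. B * norm (f y)"])
  show "AE y in M. norm (g y * f y) \<le> norm (B * norm (f y))"
  proof (rule AE_I2)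
    fix y show "norm (g y * f y) \<le> norm (B * norm (f y))"
    proof (cases "f y = 0")
      case False
      then have "norm (g y) \<le> \<bar>B\<bar>"
        using B by force
      then show ?thesis
        by (simp add: norm_mult abs_mult mult_right_mono)
    qed simp
  qed
qed (use f g in auto)

lemma integrable_continuous_mult_compact_support:
  fixes f :: "'a::euclidean_space \<Rightarrow> complex" and g :: "'a \<Rightarrow> real"
  assumes f: "integrable lborel f" and K: "compact K" "\<And>y. f y \<noteq> 0 \<Longrightarrow> y \<in> K"
    and g: "continuous_on UNIV g"
  shows "integrable lborel (\<lambda>y. of_real (g y) * f y)"
proof -
  have "compact (g ` K)"
    using K g by (intro compact_continuous_image) (auto intro: continuous_on_subset)
  then obtain B where "\<And>y. y \<in> K \<Longrightarrow> \<bar>g y\<bar> \<le> B"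
    by (meson compact_imp_bounded bounded_real imageI)
  moreover have "g \<in> borel_measurable lborel"
    using g by (simp add: borel_measurable_continuous_onI)
  ultimately show ?thesis
    using K by (intro integrable_mult_bounded_on_support[OF f, where B=B]) auto
qed

lemma emeasure_density_eq_integral:
  fixes g :: "'a::euclidean_space \<Rightarrow> real"
  assumes "integrable lborel g" and "\<And>y. g y \<ge> 0" and "X \<in> sets borel"
  shows "emeasure (density lborel (\<lambda>y. ennreal (g y))) X = ennreal (\<integral>y. g y * indicator X y \<partial>lborel)"
proof -
  have "emeasure (density lborel (\<lambda>y. ennreal (g y))) X = (\<integral>\<^sup>+y. ennreal (g y) * indicator X y \<partial>lborel)"
    using assms by (simp add: emeasure_density)
  also have "\<dots> = (\<integral>\<^sup>+y. ennreal (g y * indicator X y) \<partial>lborel)"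
    by (intro nn_integral_cong) (auto split: split_indicator)
  also have "\<dots> = ennreal (\<integral>y. g y * indicator X y \<partial>lborel)"
    by (intro nn_integral_eq_integral integrable_real_mult_indicator)
       (use assms in \<open>auto split: split_indicator\<close>)
  finally show ?thesis .
qed

lemma AE_zero_if_box_integrals_zero:
  fixes r :: "'a::euclidean_space \<Rightarrow> real"
  assumes r: "integrable lborel r"
    and box: "\<And>a b. (\<integral>y. indicator (box a b) y * r y \<partial>lborel) = 0"
  shows "AE y in lborel. r y = 0"
proof -
  let ?p = "\<lambda>y. max 0 (r y)" and ?n = "\<lambda>y. max 0 (- r y)"
  have ip: "integrable lborel ?p" and inn: "integrable lborel ?n"
    using r by auto
  have rm: "r \<in> borel_measurable lborel"
    using r by auto
  have "density lborel (\<lambda>y. ennreal (?p y)) = density lborel (\<lambda>y. ennreal (?n y))"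
  proof (rule measure_eqI_generator_eq)
    let ?E = "range (\<lambda>(a, b). box a b::'a set)"
    show "Int_stable ?E"
      by (auto simp: Int_stable_def box_Int_box)
    show "?E \<subseteq> Pow UNIV" "sets (density lborel (\<lambda>y. ennreal (?p y))) = sigma_sets UNIV ?E"
      "sets (density lborel (\<lambda>y. ennreal (?n y))) = sigma_sets UNIV ?E"
      by (simp_all add: borel_eq_box)
    let ?A = "\<lambda>n::nat. box (- (real n *\<^sub>R One)) (real n *\<^sub>R One) :: 'a set"
    show "range ?A \<subseteq> ?E" "(\<Union>i. ?A i) = UNIV"
      unfolding UN_box_eq_UNIV by auto
    show "emeasure (density lborel (\<lambda>y. ennreal (?p y))) (?A i) \<noteq> \<infinity>" for i
      using ip by (simp add: emeasure_density_eq_integral)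
    show "emeasure (density lborel (\<lambda>y. ennreal (?p y))) X = emeasure (density lborel (\<lambda>y. ennreal (?n y))) X"
      if "X \<in> ?E" for X
    proof -
      from that obtain a b where X: "X = box a b"
        by auto
      have "(\<integral>y. ?p y * indicator X y \<partial>lborel) - (\<integral>y. ?n y * indicator X y \<partial>lborel)
          = (\<integral>y. indicator X y * r y \<partial>lborel)"
        by (subst Bochner_Integration.integral_diff[symmetric])
           (auto intro!: integrable_real_mult_indicator ip inn Bochner_Integration.integral_cong
             simp: X split: split_indicator)
      then show ?thesis
        using box ip inn by (simp add: emeasure_density_eq_integral X)
    qed
  qed
  then have "AE y in lborel. ennreal (?p y) = ennreal (?n y)"
    by (intro sigma_finite_measure.density_unique[OF sigma_finite_lborel]) (use rm in auto)
  then show ?thesis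
    by eventually_elim (auto simp: max_def split: if_splits)
qed

lemma box_integral_zero_if_continuous_integrals_zero:
  fixes f :: "'a::euclidean_space \<Rightarrow> complex"
  assumes f: "integrable lborel f"
    and continuous_zero: "\<And>\<phi>. continuous_on UNIV \<phi> \<Longrightarrow> (\<integral>y. of_real (\<phi> y) * f y \<partial>lborel) = 0"
  shows "(\<integral>y. of_real (indicator (box a b) y) * f y \<partial>lborel) = 0"
proof -
  define \<phi> where "\<phi> m y = min 1 (real m * infdist y (- box a b))" for m :: nat and y :: 'a
  have cont: "continuous_on UNIV (\<phi> m)" for m
    unfolding \<phi>_def by (intro continuous_intros)
  have lim: "(\<lambda>m. \<phi> m y) \<longlonglongrightarrow> indicator (box a b) y" for y
  proof (cases "y \<in> box a b")
    case True
    have "a \<notin> box a b"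
      by (auto simp: mem_box)
    then have d: "infdist y (- box a b) > 0"
      using True by (intro infdist_pos_not_in_closed) (auto simp: closed_Compl)
    then obtain N :: nat where N: "real N * infdist y (- box a b) \<ge> 1"
      using reals_Archimedean3[OF d] by (meson less_le)
    have "\<phi> m y = 1" if "m \<ge> N" for m
    proof -
      have "real N * infdist y (- box a b) \<le> real m * infdist y (- box a b)"
        using d that by (intro mult_right_mono) auto
      then show ?thesis
        using N by (simp add: \<phi>_def)
    qed
    then have "eventually (\<lambda>m. \<phi> m y = 1) sequentially"
      unfolding eventually_sequentially by blast
    then show ?thesis
      using True by (simp add: tendsto_eventually)
  qed (simp add: \<phi>_def)
  have "(\<lambda>m. \<integral>y. of_real (\<phi> m y) * f y \<partial>lborel) \<longlonglongrightarrow> (\<integral>y. of_real (indicator (box a b) y) * f y \<partial>lborel)"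
  proof (rule integral_dominated_convergence[where w="\<lambda>y. norm (f y)"])
    show "(\<lambda>y. complex_of_real (\<phi> m y) * f y) \<in> borel_measurable lborel" for m
      using borel_measurable_continuous_onI[OF cont[of m]] f by auto
    show "AE y in lborel. (\<lambda>m. complex_of_real (\<phi> m y) * f y) \<longlonglongrightarrow> complex_of_real (indicator (box a b) y) * f y"
      using lim by (auto intro!: tendsto_intros)
    show "AE y in lborel. norm (complex_of_real (\<phi> m y) * f y) \<le> norm (f y)" for m
      by (auto simp: \<phi>_def norm_mult infdist_nonneg intro!: mult_left_le_one_le)
  qed (use f in auto)
  then show ?thesis
    using continuous_zero[OF cont] by (simp add: LIMSEQ_const_iff)
qed

lemma norm_integral_mult_le_on_support:
  fixes f :: "'a::euclidean_space \<Rightarrow> complex" and \<psi> :: "'a \<Rightarrow> real"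
  assumes f: "integrable lborel f" and K: "compact K" "\<And>y. f y \<noteq> 0 \<Longrightarrow> y \<in> K"
    and \<psi>: "continuous_on UNIV \<psi>" "\<And>y. y \<in> K \<Longrightarrow> \<bar>\<psi> y\<bar> \<le> e"
  shows "norm (\<integral>y. of_real (\<psi> y) * f y \<partial>lborel) \<le> e * (\<integral>y. norm (f y) \<partial>lborel)"
proof -
  have "norm (\<integral>y. of_real (\<psi> y) * f y \<partial>lborel) \<le> (\<integral>y. norm (of_real (\<psi> y) * f y) \<partial>lborel)"
    by (rule integral_norm_bound)
  also have "\<dots> \<le> (\<integral>y. e * norm (f y) \<partial>lborel)"
  proof (rule integral_mono)
    show "integrable lborel (\<lambda>y. norm (of_real (\<psi> y) * f y))"
      using integrable_continuous_mult_compact_support[OF f K \<psi>(1)] by simp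
    show "norm (of_real (\<psi> y) * f y) \<le> e * norm (f y)" for y
      using \<psi>(2)[OF K(2)] by (cases "f y = 0") (auto simp: norm_mult intro: mult_right_mono)
  qed (use f in auto)
  finally show ?thesis
    by simp
qed

lemma continuous_integral_zero_if_polynomial_integrals_zero:
  fixes f :: "'a::euclidean_space \<Rightarrow> complex"
  assumes f: "integrable lborel f" and K: "compact K" "\<And>y. f y \<noteq> 0 \<Longrightarrow> y \<in> K"
    and poly_zero: "\<And>g. real_polynomial_function g \<Longrightarrow> (\<integral>y. of_real (g y) * f y \<partial>lborel) = 0"
    and \<phi>: "continuous_on UNIV \<phi>"
  shows "(\<integral>y. of_real (\<phi> y) * f y \<partial>lborel) = 0"
proof -
  define N where "N = (\<integral>y. norm (f y) \<partial>lborel)"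
  have "N \<ge> 0"
    unfolding N_def by (intro integral_nonneg_AE) auto
  have "norm (\<integral>y. of_real (\<phi> y) * f y \<partial>lborel) \<le> 0 + e" if "e > 0" for e
  proof -
    obtain g where g: "real_polynomial_function g"
      and approx: "\<And>y. y \<in> K \<Longrightarrow> \<bar>\<phi> y - g y\<bar> < e / (N + 1)"
      using Stone_Weierstrass_real_polynomial_function[of K \<phi> "e / (N + 1)"] \<phi> K \<open>e > 0\<close> \<open>N \<ge> 0\<close>
      by (metis continuous_on_subset divide_pos_pos top_greatest add_nonneg_pos zero_less_one)
    have g_cont: "continuous_on UNIV g"
      using g by (simp add: continuous_on_polymonial_function real_polynomial_function_eq)
    have "(\<integral>y. of_real (\<phi> y) * f y \<partial>lborel) = (\<integral>y. of_real (\<phi> y - g y) * f y + of_real (g y) * f y \<partial>lborel)"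
      by (intro Bochner_Integration.integral_cong) (auto simp: algebra_simps)
    also have "\<dots> = (\<integral>y. of_real (\<phi> y - g y) * f y \<partial>lborel)"
      using poly_zero[OF g] f K \<phi> g_cont
      by (simp add: integrable_continuous_mult_compact_support continuous_on_diff del: of_real_diff)
    also have "norm \<dots> \<le> e / (N + 1) * N"
      using norm_integral_mult_le_on_support[OF f K, of "\<lambda>y. \<phi> y - g y" "e / (N + 1)"] approx \<phi> g_cont
      by (simp add: N_def less_imp_le continuous_on_diff del: of_real_diff)
    also have "\<dots> \<le> e"
      using \<open>e > 0\<close> \<open>N \<ge> 0\<close> by (simp add: field_simps)
    finally show ?thesis
      by simp
  qed
  then show ?thesis
    using field_le_epsilon[of "norm (\<integral>y. of_real (\<phi> y) * f y \<partial>lborel)" 0] by simp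
qed

lemma AE_zero_if_polynomial_integrals_zero:
  fixes f :: "'a::euclidean_space \<Rightarrow> complex"
  assumes f: "integrable lborel f" and K: "compact K" "\<And>y. f y \<noteq> 0 \<Longrightarrow> y \<in> K"
    and poly_zero: "\<And>g. real_polynomial_function g \<Longrightarrow> (\<integral>y. of_real (g y) * f y \<partial>lborel) = 0"
  shows "AE y in lborel. f y = 0"
proof -
  have box_zero: "(\<integral>y. of_real (indicator (box a b) y) * f y \<partial>lborel) = 0" for a b
    using continuous_integral_zero_if_polynomial_integrals_zero[OF f K poly_zero]
    by (rule box_integral_zero_if_continuous_integrals_zero[OF f])
  have box_integrable: "integrable lborel (\<lambda>y. of_real (indicator (box a b) y) * f y)" for a b
    by (rule integrable_mult_bounded_on_support[OF f, where B=1]) (auto simp: indicator_def)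
  have "AE y in lborel. Re (f y) = 0"
  proof (rule AE_zero_if_box_integrals_zero)
    show "(\<integral>y. indicator (box a b) y * Re (f y) \<partial>lborel) = 0" for a b
      using integral_Re[OF box_integrable[of a b]] box_zero[of a b] by simp
  qed (use f in auto)
  moreover have "AE y in lborel. Im (f y) = 0"
  proof (rule AE_zero_if_box_integrals_zero)
    show "(\<integral>y. indicator (box a b) y * Im (f y) \<partial>lborel) = 0" for a b
      using integral_Im[OF box_integrable[of a b]] box_zero[of a b] by simp
  qed (use f in auto)
  ultimately show ?thesis
    by eventually_elim (simp add: complex_eq_iff)
qed

section \<open>Orthonormal frames in the plane\<close>

lemma inner_vec2: "(x::real^2) \<bullet> y = x$1 * y$1 + x$2 * y$2"
  by (simp add: inner_vec_def sum_2)

lemma perp2_nth [simp]: "perp2 x $ 1 = - (x $ 2)" "perp2 x $ 2 = x $ 1"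
  by (simp_all add: perp2_def)

lemma perp2_add: "perp2 (x + y) = perp2 x + perp2 y"
  and perp2_scaleR: "perp2 (r *\<^sub>R x) = r *\<^sub>R perp2 x"
  and perp2_perp2: "perp2 (perp2 x) = - x"
  by (simp_all add: vec_eq_iff forall_2)

lemma inner_perp2_self: "x \<bullet> perp2 x = 0"
  and inner_perp2_perp2: "perp2 x \<bullet> perp2 y = x \<bullet> y"
  by (simp_all add: inner_vec2 algebra_simps)

lemma frame_decomposition:
  assumes "norm q = 1"
  shows "y = (q \<bullet> y) *\<^sub>R q + (perp2 q \<bullet> y) *\<^sub>R perp2 q"
proof -
  have "q$1 * q$1 + q$2 * q$2 = 1"
    using assms by (metis inner_vec2 norm_eq_1)
  moreover have "(q \<bullet> y) * q$1 + (perp2 q \<bullet> y) * perp2 q $ 1 = (q$1 * q$1 + q$2 * q$2) * y$1"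
    and "(q \<bullet> y) * q$2 + (perp2 q \<bullet> y) * perp2 q $ 2 = (q$1 * q$1 + q$2 * q$2) * y$2"
    by (simp_all add: inner_vec2 algebra_simps)
  ultimately show ?thesis
    by (simp add: vec_eq_iff forall_2)
qed

lemma bounded_linear_frame_expansion:
  fixes h :: "real^2 \<Rightarrow> real"
  assumes "bounded_linear h" and q: "norm q = 1"
  shows "h y = h q * (q \<bullet> y) + h (perp2 q) * (perp2 q \<bullet> y)"
proof -
  interpret bounded_linear h
    by fact
  have "h y = h ((q \<bullet> y) *\<^sub>R q + (perp2 q \<bullet> y) *\<^sub>R perp2 q)"
    by (subst frame_decomposition[OF q, of y, symmetric]) (rule refl)
  then show ?thesis
    by (simp add: add scale mult.commute)
qed

lemma cdot_add_left: "cdot (x + y) v = cdot x v + cdot y v"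
  and cdot_scaleR_left: "cdot (r *\<^sub>R x) v = of_real r * cdot x v"
  and cdot_diff_left: "cdot (x - y) v = cdot x v - cdot y v"
  and cdot_diff_right: "cdot x (v - w) = cdot x v - cdot x w"
  by (simp_all add: cdot_def algebra_simps)

lemma cdot_eq_0_iff_frame:
  assumes "q \<noteq> 0"
  shows "v = 0 \<longleftrightarrow> cdot q v = 0 \<and> cdot (perp2 q) v = 0"
proof
  define c where "c = q$1 * q$1 + q$2 * q$2"
  assume "cdot q v = 0 \<and> cdot (perp2 q) v = 0"
  moreover have "of_real c * v$1 = of_real (q$1) * cdot q v - of_real (q$2) * cdot (perp2 q) v"
    and "of_real c * v$2 = of_real (q$2) * cdot q v + of_real (q$1) * cdot (perp2 q) v"
    by (simp_all add: c_def cdot_def algebra_simps)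
  moreover have "c \<noteq> 0"
    using assms unfolding c_def by (metis inner_eq_zero_iff inner_vec2)
  ultimately show "v = 0"
    by (simp add: vec_eq_iff forall_2)
qed (simp add: cdot_def)

lemma integrable_cdot:
  fixes F :: "real^2 \<Rightarrow> complex^2"
  assumes "\<And>j. integrable lborel (\<lambda>y. F y $ j)"
  shows "integrable lborel (\<lambda>y. cdot e (F y))"
  unfolding cdot_def using assms by (intro Bochner_Integration.integrable_add integrable_mult_right)

lemma norm_frame_direction:
  assumes "norm q = 1"
  shows "norm (q + s *\<^sub>R perp2 q) = sqrt (1 + s\<^sup>2)"
  using assms by (simp add: norm_eq_sqrt_inner inner_add_left inner_add_right inner_perp2_self
      inner_perp2_perp2 inner_commute[of "perp2 q" q] power2_eq_square norm_eq_1)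

lemma frame_direction_nonzero:
  assumes "norm q = 1"
  shows "sqrt (1 + s\<^sup>2) > 0" and "q + s *\<^sub>R perp2 q \<noteq> 0"
proof -
  have "1 + s\<^sup>2 > 0"
    by (simp add: add_pos_nonneg)
  then show "sqrt (1 + s\<^sup>2) > 0" and "q + s *\<^sub>R perp2 q \<noteq> 0"
    using norm_frame_direction[OF assms, of s] by auto
qed

lemma sgn_frame_direction_in_S_q:
  assumes q: "norm q = 1" and "\<bar>s\<bar> \<le> 1"
  shows "sgn (q + s *\<^sub>R perp2 q) \<in> S_q q"
proof -
  have "sqrt (1 + s\<^sup>2) \<le> 2"
    using \<open>\<bar>s\<bar> \<le> 1\<close> abs_le_square_iff[of s 1] by (intro real_le_lsqrt) auto
  then have "1 / 2 \<le> 1 / sqrt (1 + s\<^sup>2)"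
    using frame_direction_nonzero[OF q] by (simp add: field_simps)
  moreover have "q \<bullet> sgn (q + s *\<^sub>R perp2 q) = 1 / sqrt (1 + s\<^sup>2)"
    using q by (simp add: sgn_div_norm norm_frame_direction inner_add_right inner_perp2_self
        divide_inverse norm_eq_1)
  ultimately show ?thesis
    using frame_direction_nonzero[OF q] by (simp add: S_q_def unit_circle_def norm_sgn)
qed

lemma sgn_frame_direction_in_S_q_perp:
  assumes q: "norm q = 1" and "s \<le> -1"
  shows "sgn (q + s *\<^sub>R perp2 q) \<in> S_q_perp q"
proof -
  have "1 \<le> (- s) * (- s)"
    using mult_mono[of 1 "- s" 1 "- s"] \<open>s \<le> -1\<close> by simp
  then have "sqrt (1 + s\<^sup>2) \<le> - 2 * s"
    using \<open>s \<le> -1\<close> by (intro real_le_lsqrt) (auto simp: power2_eq_square)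
  then have "1 / 2 \<le> - s / sqrt (1 + s\<^sup>2)"
    using frame_direction_nonzero[OF q] by (simp add: field_simps)
  moreover have "q \<bullet> perp2 (sgn (q + s *\<^sub>R perp2 q)) = - s / sqrt (1 + s\<^sup>2)"
    using q by (simp add: sgn_div_norm norm_frame_direction perp2_add perp2_scaleR perp2_perp2
        inner_add_right inner_diff_right inner_perp2_self divide_inverse norm_eq_1)
  ultimately show ?thesis
    using frame_direction_nonzero[OF q] by (simp add: S_q_perp_def unit_circle_def norm_sgn)
qed

lemma finite_frame_directions_orthogonal:
  assumes q: "norm q = 1" and "d \<noteq> 0"
  shows "finite {s. (q + s *\<^sub>R perp2 q) \<bullet> d = 0}"
proof (cases "perp2 q \<bullet> d = 0")
  case True
  then have "q \<bullet> d \<noteq> 0"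
    using frame_decomposition[OF q, of d] \<open>d \<noteq> 0\<close> by auto
  with True show ?thesis
    by (simp add: inner_add_left)
next
  case False
  then have "{s. (q + s *\<^sub>R perp2 q) \<bullet> d = 0} \<subseteq> {- (q \<bullet> d) / (perp2 q \<bullet> d)}"
    by (auto simp: inner_add_left field_simps)
  then show ?thesis
    using finite_subset by blast
qed

section \<open>Moments in a frame\<close>

definition frame_moment :: "real^2 \<Rightarrow> (real^2 \<Rightarrow> complex) \<Rightarrow> nat \<Rightarrow> nat \<Rightarrow> complex" where
  "frame_moment q f j k = (\<integral>y. of_real ((q \<bullet> y) ^ j * (perp2 q \<bullet> y) ^ k) * f y \<partial>lborel)"

lemma integrable_frame_monomial_mult:
  fixes f :: "real^2 \<Rightarrow> complex"
  assumes "integrable lborel f" "compact K" "\<And>y. f y \<noteq> 0 \<Longrightarrow> y \<in> K"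
  shows "integrable lborel (\<lambda>y. of_real ((q \<bullet> y) ^ j * (perp2 q \<bullet> y) ^ k) * f y)"
  using assms by (intro integrable_continuous_mult_compact_support) (auto intro!: continuous_intros)

lemma frame_moment_monomial_mult:
  "frame_moment q (\<lambda>y. of_real ((q \<bullet> y) ^ j * (perp2 q \<bullet> y) ^ k) * f y) j' k'
    = frame_moment q f (j + j') (k + k')"
  unfolding frame_moment_def
  by (intro Bochner_Integration.integral_cong) (auto simp: power_add algebra_simps)

lemma polynomial_integral_zero_if_frame_moments_zero:
  fixes f :: "real^2 \<Rightarrow> complex"
  assumes "real_polynomial_function g" and q: "norm q = 1"
    and "integrable lborel f" and K: "compact K" and "\<And>y. f y \<noteq> 0 \<Longrightarrow> y \<in> K"
    and "\<And>j k. frame_moment q f j k = 0"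
  shows "(\<integral>y. of_real (g y) * f y \<partial>lborel) = 0"
  using assms(1,3,5,6)
proof (induction arbitrary: f)
  case (linear h)
  obtain \<alpha> \<beta> where h: "\<And>y. h y = \<alpha> * (q \<bullet> y) + \<beta> * (perp2 q \<bullet> y)"
    using bounded_linear_frame_expansion[OF linear.hyps q] by blast
  have "(\<integral>y. of_real (h y) * f y \<partial>lborel) = of_real \<alpha> * frame_moment q f 1 0 + of_real \<beta> * frame_moment q f 0 1"
    using integrable_frame_monomial_mult[OF linear.prems(1) K linear.prems(2), of q 1 0]
      integrable_frame_monomial_mult[OF linear.prems(1) K linear.prems(2), of q 0 1]
    by (simp add: h frame_moment_def distrib_right mult.assoc)
  then show ?case
    using linear.prems(3) by simp
next
  case (const c)
  then show ?case
    using const.prems(3)[of 0 0] by (simp add: frame_moment_def)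
next
  case (add g1 g2)
  have "integrable lborel (\<lambda>y. of_real (g y) * f y)" if "real_polynomial_function g" for g
    using add.prems K that by (intro integrable_continuous_mult_compact_support)
      (auto intro: continuous_on_real_polynomial_function)
  then show ?case
    using add by (simp add: distrib_right)
next
  case (mult g1 g2)
  have integrable: "integrable lborel (\<lambda>y. of_real (g2 y) * f y)"
    using mult.prems K mult.hyps(2)
    by (intro integrable_continuous_mult_compact_support) (auto intro: continuous_on_real_polynomial_function)
  have "frame_moment q (\<lambda>y. of_real (g2 y) * f y) j k = 0" for j k
  proof -
    have "frame_moment q (\<lambda>y. of_real (g2 y) * f y) j k
        = (\<integral>y. of_real (g2 y) * (of_real ((q \<bullet> y) ^ j * (perp2 q \<bullet> y) ^ k) * f y) \<partial>lborel)"
      unfolding frame_moment_def by (intro Bochner_Integration.integral_cong) auto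
    also have "\<dots> = 0"
    proof (rule mult.IH(2))
      show "integrable lborel (\<lambda>y. of_real ((q \<bullet> y) ^ j * (perp2 q \<bullet> y) ^ k) * f y)"
        by (rule integrable_frame_monomial_mult[OF mult.prems(1) K mult.prems(2)])
      show "frame_moment q (\<lambda>y. of_real ((q \<bullet> y) ^ j * (perp2 q \<bullet> y) ^ k) * f y) j' k' = 0" for j' k'
        unfolding frame_moment_monomial_mult by (rule mult.prems(3))
    qed (use mult.prems(2) in auto)
    finally show ?thesis .
  qed
  then have "(\<integral>y. of_real (g1 y) * (of_real (g2 y) * f y) \<partial>lborel) = 0"
    using mult.prems integrable by (intro mult.IH(1)) auto
  then show ?case
    by (simp add: mult.assoc)
qed

lemma AE_zero_if_frame_moments_zero:
  fixes f :: "real^2 \<Rightarrow> complex"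
  assumes "norm q = 1" and "integrable lborel f" and "compact K" and "\<And>y. f y \<noteq> 0 \<Longrightarrow> y \<in> K"
    and "\<And>j k. frame_moment q f j k = 0"
  shows "AE y in lborel. f y = 0"
  using assms by (intro AE_zero_if_polynomial_integrals_zero polynomial_integral_zero_if_frame_moments_zero)

lemma AE_eq_if_frame_moments_zero:
  fixes F G :: "real^2 \<Rightarrow> complex^2"
  assumes q: "norm q = 1"
    and F: "\<And>j. integrable lborel (\<lambda>y. F y $ j)" and G: "\<And>j. integrable lborel (\<lambda>y. G y $ j)"
    and K: "compact K" "\<And>y. F y \<noteq> G y \<Longrightarrow> y \<in> K"
    and moments: "\<And>j k. frame_moment q (\<lambda>y. cdot q (F y - G y)) j k = 0
      \<and> frame_moment q (\<lambda>y. cdot (perp2 q) (F y - G y)) j k = 0"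
  shows "AE y in lborel. F y = G y"
proof -
  have D: "integrable lborel (\<lambda>y. cdot e (F y - G y))" "\<And>y. cdot e (F y - G y) \<noteq> 0 \<Longrightarrow> y \<in> K" for e
    using integrable_cdot[OF F] integrable_cdot[OF G] by (auto simp: cdot_diff_right intro!: K(2))
  have "q \<noteq> 0"
    using q by auto
  have "AE y in lborel. cdot q (F y - G y) = 0"
    by (rule AE_zero_if_frame_moments_zero[OF q D(1) K(1)]) (use D(2) moments in blast)+
  moreover have "AE y in lborel. cdot (perp2 q) (F y - G y) = 0"
    by (rule AE_zero_if_frame_moments_zero[OF q D(1) K(1)]) (use D(2) moments in blast)+
  ultimately show ?thesis
    by eventually_elim (metis \<open>q \<noteq> 0\<close> cdot_eq_0_iff_frame right_minus_eq)
qed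

definition directional_moment_poly :: "real^2 \<Rightarrow> (real^2 \<Rightarrow> complex) \<Rightarrow> nat \<Rightarrow> complex poly" where
  "directional_moment_poly q f n = (\<Sum>k\<le>n. monom (of_nat (n choose k) * frame_moment q f (n - k) k) k)"

lemma coeff_directional_moment_poly:
  "k \<le> n \<Longrightarrow> coeff (directional_moment_poly q f n) k = of_nat (n choose k) * frame_moment q f (n - k) k"
  by (simp add: directional_moment_poly_def coeff_sum coeff_monom)

lemma poly_directional_moment_poly:
  fixes f :: "real^2 \<Rightarrow> complex"
  assumes "integrable lborel f" "compact K" "\<And>y. f y \<noteq> 0 \<Longrightarrow> y \<in> K"
  shows "poly (directional_moment_poly q f n) (of_real s)
    = (\<integral>y. of_real (((q + s *\<^sub>R perp2 q) \<bullet> y) ^ n) * f y \<partial>lborel)"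
proof -
  have "of_real (((q + s *\<^sub>R perp2 q) \<bullet> y) ^ n) * f y
      = (\<Sum>k\<le>n. of_nat (n choose k) * of_real s ^ k
          * (of_real ((q \<bullet> y) ^ (n - k) * (perp2 q \<bullet> y) ^ k) * f y))" for y
  proof -
    have "((q + s *\<^sub>R perp2 q) \<bullet> y) ^ n = (s * (perp2 q \<bullet> y) + q \<bullet> y) ^ n"
      by (simp add: inner_add_left add.commute)
    also have "\<dots> = (\<Sum>k\<le>n. of_nat (n choose k) * (s * (perp2 q \<bullet> y)) ^ k * (q \<bullet> y) ^ (n - k))"
      by (rule binomial_ring)
    finally show ?thesis
      by (simp add: sum_distrib_left sum_distrib_right power_mult_distrib mult_ac)
  qed
  then have "(\<integral>y. of_real (((q + s *\<^sub>R perp2 q) \<bullet> y) ^ n) * f y \<partial>lborel)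
      = (\<Sum>k\<le>n. of_nat (n choose k) * of_real s ^ k * frame_moment q f (n - k) k)"
    using integrable_frame_monomial_mult[OF assms]
    by (simp add: Bochner_Integration.integral_sum frame_moment_def)
  then show ?thesis
    by (simp add: directional_moment_poly_def poly_sum poly_monom algebra_simps)
qed

lemma poly_eq_0_if_infinitely_many_real_roots:
  fixes p :: "complex poly"
  assumes "infinite S" and "\<And>s. s \<in> S \<Longrightarrow> poly p (of_real s) = 0"
  shows "p = 0"
proof (rule ccontr)
  assume "p \<noteq> 0"
  then have "finite (complex_of_real -` {z. poly p z = 0})"
    by (intro finite_vimageI poly_roots_finite) (auto simp: inj_of_real)
  then show False
    using assms by (auto dest: finite_subset[rotated])
qed

lemma poly_pair_eq_0:
  fixes a b :: "'a::idom poly"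
  assumes "a + [:0, 1:] * b = 0" and "b - [:0, 1:] * a = 0"
  shows "a = 0 \<and> b = 0"
proof -
  have "[:1, 0, 1:] = 1 + [:0, 1:] * ([:0, 1:] :: 'a poly)"
    by (simp add: one_pCons)
  then have "[:1, 0, 1:] * a = (a + [:0, 1:] * b) - [:0, 1:] * (b - [:0, 1:] * a)"
    and "[:1, 0, 1:] * b = [:0, 1:] * (a + [:0, 1:] * b) + (b - [:0, 1:] * a)"
    by (simp_all add: algebra_simps)
  then have "[:1, 0, 1:] * a = 0" and "[:1, 0, 1:] * b = 0"
    using assms by simp_all
  then show ?thesis
    by (simp only: mult_eq_0_iff) simp
qed

lemma frame_moments_zero_if_directional_moments_zero:
  fixes f g :: "real^2 \<Rightarrow> complex"
  assumes f: "integrable lborel f" "\<And>y. f y \<noteq> 0 \<Longrightarrow> y \<in> K"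
    and g: "integrable lborel g" "\<And>y. g y \<noteq> 0 \<Longrightarrow> y \<in> K"
    and K: "compact K"
    and "infinite S"
    and S: "\<And>s n. s \<in> S \<Longrightarrow>
      (\<integral>y. of_real (((q + s *\<^sub>R perp2 q) \<bullet> y) ^ n) * (f y + of_real s * g y) \<partial>lborel) = 0"
    and "infinite T"
    and T: "\<And>s n. s \<in> T \<Longrightarrow>
      (\<integral>y. of_real (((q + s *\<^sub>R perp2 q) \<bullet> y) ^ n) * (g y - of_real s * f y) \<partial>lborel) = 0"
  shows "frame_moment q f j k = 0 \<and> frame_moment q g j k = 0"
proof -
  define a where "a = directional_moment_poly q f (j + k)"
  define b where "b = directional_moment_poly q g (j + k)"
  have integrable: "integrable lborel (\<lambda>y. of_real (((q + s *\<^sub>R perp2 q) \<bullet> y) ^ n) * h y)"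
    if "integrable lborel h" "\<And>y. h y \<noteq> 0 \<Longrightarrow> y \<in> K" for h :: "real^2 \<Rightarrow> complex" and s n
    using that K by (intro integrable_continuous_mult_compact_support) (auto intro!: continuous_intros)
  have "a + [:0, 1:] * b = 0"
  proof (rule poly_eq_0_if_infinitely_many_real_roots[OF \<open>infinite S\<close>])
    fix s assume "s \<in> S"
    then show "poly (a + [:0, 1:] * b) (of_real s) = 0"
      using S[of s "j + k"] integrable[OF f] integrable[OF g]
      by (simp add: a_def b_def poly_directional_moment_poly[OF f(1) K f(2)]
          poly_directional_moment_poly[OF g(1) K g(2)] distrib_left mult.left_commute)
  qed
  moreover have "b - [:0, 1:] * a = 0"
  proof (rule poly_eq_0_if_infinitely_many_real_roots[OF \<open>infinite T\<close>])
    fix s assume "s \<in> T"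
    then show "poly (b - [:0, 1:] * a) (of_real s) = 0"
      using T[of s "j + k"] integrable[OF f] integrable[OF g]
      by (simp add: a_def b_def poly_directional_moment_poly[OF f(1) K f(2)]
          poly_directional_moment_poly[OF g(1) K g(2)] right_diff_distrib mult.left_commute)
  qed
  ultimately have "a = 0" and "b = 0"
    using poly_pair_eq_0 by blast+
  then have "coeff a k = 0" and "coeff b k = 0"
    by simp_all
  then show ?thesis
    by (simp add: a_def b_def coeff_directional_moment_poly)
qed

section \<open>Phaseless far-field data\<close>

lemma directional_moments_zero_if_phaseless_data:
  fixes F G :: "real^2 \<Rightarrow> complex^2" and \<tau>1 c :: complex
  assumes F: "\<And>j. integrable lborel (\<lambda>y. F y $ j)" and G: "\<And>j. integrable lborel (\<lambda>y. G y $ j)"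
    and K: "compact K" "\<And>y. F y \<noteq> G y \<Longrightarrow> y \<in> K"
    and x: "norm x = 1" "x \<bullet> (z0 - z1) \<noteq> 0"
    and "\<omega>min < \<omega>max" and "\<sigma> > 0" and "\<tau>1 \<noteq> 0" and "c \<noteq> 0"
    and data: "\<forall>\<omega> \<in> {\<omega>min<..<\<omega>max}. \<forall>\<tau> \<in> {0, \<tau>1}. \<forall>z \<in> {z0, z1}.
      cmod ((\<integral>y. cis (- (\<omega> / \<sigma>) * (x \<bullet> y)) * cdot e (F y) \<partial>lborel) + \<tau> * cis (- (\<omega> / \<sigma>) * (x \<bullet> z)) * c)
      = cmod ((\<integral>y. cis (- (\<omega> / \<sigma>) * (x \<bullet> y)) * cdot e (G y) \<partial>lborel) + \<tau> * cis (- (\<omega> / \<sigma>) * (x \<bullet> z)) * c)"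
  shows "(\<integral>y. of_real ((x \<bullet> y) ^ n) * cdot e (F y - G y) \<partial>lborel) = 0"
proof -
  obtain C where C: "\<And>y. y \<in> K \<Longrightarrow> norm y \<le> C"
    using K(1) by (meson bounded_iff compact_imp_bounded)
  have "\<omega>min / \<sigma> < \<omega>max / \<sigma>"
    using \<open>\<omega>min < \<omega>max\<close> \<open>\<sigma> > 0\<close> by (simp add: divide_strict_right_mono)
  then obtain t0 \<epsilon> where "\<epsilon> > 0"
    and good: "ball t0 \<epsilon> \<subseteq> {\<omega>min / \<sigma><..<\<omega>max / \<sigma>} \<inter> {t. sin (t * (x \<bullet> (z0 - z1))) \<noteq> 0}"
    using exists_interval_sin_mult_nonzero x(2) by blast
  have integrable: "integrable lborel (\<lambda>y. cis (- t * (x \<bullet> y)) * cdot e (H y))"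
    if "\<And>j. integrable lborel (\<lambda>y. H y $ j)" for t and H :: "real^2 \<Rightarrow> complex^2"
    by (rule integrable_mult_bounded_on_support[OF integrable_cdot[OF that], where B=1])
       (auto simp: cis_conv_exp intro!: borel_measurable_continuous_onI continuous_intros)
  show ?thesis
  proof (rule moments_zero_if_fourier_zero_on_ball[OF _ _ _ \<open>\<epsilon> > 0\<close>])
    show "integrable lborel (\<lambda>y. cdot e (F y - G y))"
      using integrable_cdot[OF F] integrable_cdot[OF G] by (simp add: cdot_diff_right)
    show "\<bar>x \<bullet> y\<bar> \<le> C" if "cdot e (F y - G y) \<noteq> 0" for y
    proof -
      have "F y \<noteq> G y"
        using that by (auto simp: cdot_def)
      then show ?thesis
        using K(2) C Cauchy_Schwarz_ineq2[of x y] x(1) by fastforce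
    qed
    fix t assume "t \<in> ball t0 \<epsilon>"
    then have t: "t * \<sigma> \<in> {\<omega>min<..<\<omega>max}" "sin (t * (x \<bullet> (z0 - z1))) \<noteq> 0"
      using good \<open>\<sigma> > 0\<close> by (auto simp: field_simps)
    have "t * \<sigma> / \<sigma> = t"
      using \<open>\<sigma> > 0\<close> by simp
    with bspec[OF data t(1)]
    have "(\<integral>y. cis (- t * (x \<bullet> y)) * cdot e (F y) \<partial>lborel) = (\<integral>y. cis (- t * (x \<bullet> y)) * cdot e (G y) \<partial>lborel)"
      by (intro phase_retrieval_two_point_sources[OF \<open>\<tau>1 \<noteq> 0\<close> \<open>c \<noteq> 0\<close> t(2)]) simp
    then show "(\<integral>y. exp (- \<i> * of_real t * of_real (x \<bullet> y)) * cdot e (F y - G y) \<partial>lborel) = 0"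
      using integrable[OF F, of t] integrable[OF G, of t]
      by (simp add: cis_conv_exp cdot_diff_right right_diff_distrib mult.assoc)
  qed (simp add: borel_measurable_inner)
qed

lemma integral_directional_moment_scaleR:
  "(\<integral>y. of_real (((r *\<^sub>R x) \<bullet> y) ^ n) * cdot (r *\<^sub>R e) (h y) \<partial>lborel)
    = of_real (r ^ Suc n) * (\<integral>y. of_real ((x \<bullet> y) ^ n) * cdot e (h y) \<partial>lborel)"
  by (simp add: cdot_scaleR_left power_mult_distrib algebra_simps flip: integral_mult_right_zero)

lemma p_wave_moments_zero:
  fixes F G :: "real^2 \<Rightarrow> complex^2"
  assumes F: "\<And>j. integrable lborel (\<lambda>y. F y $ j)" and G: "\<And>j. integrable lborel (\<lambda>y. G y $ j)"
    and K: "compact K" "\<And>y. F y \<noteq> G y \<Longrightarrow> y \<in> K"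
    and "2 * mu + lam > 0" and "\<omega>min < \<omega>max" and "\<tau>1 \<noteq> 0"
    and data: "\<forall>xh \<in> S_q q. \<forall>\<omega> \<in> {\<omega>min<..<\<omega>max}. \<forall>\<tau> \<in> {0, \<tau>1}. \<forall>z \<in> {z0, z1}.
      cmod (farfield_pt_p lam mu F z xh q \<omega> \<tau>) = cmod (farfield_pt_p lam mu G z xh q \<omega> \<tau>)"
    and v: "sgn v \<in> S_q q" "v \<bullet> (z0 - z1) \<noteq> 0"
  shows "(\<integral>y. of_real ((v \<bullet> y) ^ n) * cdot v (F y - G y) \<partial>lborel) = 0"
proof -
  have "v \<noteq> 0" and "norm (sgn v) = 1" and "q \<bullet> sgn v \<ge> 1 / 2"
    using v(1) by (auto simp: S_q_def unit_circle_def)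
  have "(\<integral>y. of_real ((sgn v \<bullet> y) ^ n) * cdot (sgn v) (F y - G y) \<partial>lborel) = 0"
  proof (rule directional_moments_zero_if_phaseless_data[OF F G K \<open>norm (sgn v) = 1\<close>, where
        \<sigma>="sqrt (lam + 2 * mu)" and c="of_real (q \<bullet> sgn v)"])
    show "\<forall>\<omega> \<in> {\<omega>min<..<\<omega>max}. \<forall>\<tau> \<in> {0, \<tau>1}. \<forall>z \<in> {z0, z1}.
      cmod ((\<integral>y. cis (- (\<omega> / sqrt (lam + 2 * mu)) * (sgn v \<bullet> y)) * cdot (sgn v) (F y) \<partial>lborel)
        + \<tau> * cis (- (\<omega> / sqrt (lam + 2 * mu)) * (sgn v \<bullet> z)) * of_real (q \<bullet> sgn v))
      = cmod ((\<integral>y. cis (- (\<omega> / sqrt (lam + 2 * mu)) * (sgn v \<bullet> y)) * cdot (sgn v) (G y) \<partial>lborel)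
        + \<tau> * cis (- (\<omega> / sqrt (lam + 2 * mu)) * (sgn v \<bullet> z)) * of_real (q \<bullet> sgn v))"
      using data v(1) by (simp add: farfield_pt_p_def farfield_p_def k_p_def)
  qed (use assms \<open>v \<noteq> 0\<close> \<open>q \<bullet> sgn v \<ge> 1 / 2\<close> in \<open>auto simp: sgn_div_norm add.commute\<close>)
  moreover have "norm v *\<^sub>R sgn v = v"
    using \<open>v \<noteq> 0\<close> by (simp add: sgn_div_norm)
  ultimately show ?thesis
    using integral_directional_moment_scaleR[of "norm v" "sgn v" n "sgn v" "\<lambda>y. F y - G y"] by simp
qed

lemma s_wave_moments_zero:
  fixes F G :: "real^2 \<Rightarrow> complex^2"
  assumes F: "\<And>j. integrable lborel (\<lambda>y. F y $ j)" and G: "\<And>j. integrable lborel (\<lambda>y. G y $ j)"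
    and K: "compact K" "\<And>y. F y \<noteq> G y \<Longrightarrow> y \<in> K"
    and "mu > 0" and "\<omega>min < \<omega>max" and "\<tau>1 \<noteq> 0"
    and data: "\<forall>xh \<in> S_q_perp q. \<forall>\<omega> \<in> {\<omega>min<..<\<omega>max}. \<forall>\<tau> \<in> {0, \<tau>1}. \<forall>z \<in> {z0, z1}.
      cmod (farfield_pt_s mu F z xh q \<omega> \<tau>) = cmod (farfield_pt_s mu G z xh q \<omega> \<tau>)"
    and v: "sgn v \<in> S_q_perp q" "v \<bullet> (z0 - z1) \<noteq> 0"
  shows "(\<integral>y. of_real ((v \<bullet> y) ^ n) * cdot (perp2 v) (F y - G y) \<partial>lborel) = 0"
proof -
  have "v \<noteq> 0" and "norm (sgn v) = 1" and "q \<bullet> perp2 (sgn v) \<ge> 1 / 2"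
    using v(1) by (auto simp: S_q_perp_def unit_circle_def)
  have "(\<integral>y. of_real ((sgn v \<bullet> y) ^ n) * cdot (perp2 (sgn v)) (F y - G y) \<partial>lborel) = 0"
  proof (rule directional_moments_zero_if_phaseless_data[OF F G K \<open>norm (sgn v) = 1\<close>, where
        \<sigma>="sqrt mu" and c="of_real (q \<bullet> perp2 (sgn v))"])
    show "\<forall>\<omega> \<in> {\<omega>min<..<\<omega>max}. \<forall>\<tau> \<in> {0, \<tau>1}. \<forall>z \<in> {z0, z1}.
      cmod ((\<integral>y. cis (- (\<omega> / sqrt mu) * (sgn v \<bullet> y)) * cdot (perp2 (sgn v)) (F y) \<partial>lborel)
        + \<tau> * cis (- (\<omega> / sqrt mu) * (sgn v \<bullet> z)) * of_real (q \<bullet> perp2 (sgn v)))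
      = cmod ((\<integral>y. cis (- (\<omega> / sqrt mu) * (sgn v \<bullet> y)) * cdot (perp2 (sgn v)) (G y) \<partial>lborel)
        + \<tau> * cis (- (\<omega> / sqrt mu) * (sgn v \<bullet> z)) * of_real (q \<bullet> perp2 (sgn v)))"
      using data v(1) by (simp add: farfield_pt_s_def farfield_s_def k_s_def)
  qed (use assms \<open>v \<noteq> 0\<close> \<open>q \<bullet> perp2 (sgn v) \<ge> 1 / 2\<close> in \<open>auto simp: sgn_div_norm\<close>)
  moreover have "norm v *\<^sub>R sgn v = v"
    using \<open>v \<noteq> 0\<close> by (simp add: sgn_div_norm)
  ultimately show ?thesis
    using integral_directional_moment_scaleR[of "norm v" "sgn v" n "perp2 (sgn v)" "\<lambda>y. F y - G y"]
    by (simp flip: perp2_scaleR)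
qed

lemma frame_moments_zero_if_phaseless_data:
  fixes F G :: "real^2 \<Rightarrow> complex^2"
  assumes F: "\<And>j. integrable lborel (\<lambda>y. F y $ j)" and G: "\<And>j. integrable lborel (\<lambda>y. G y $ j)"
    and K: "compact K" "\<And>y. F y \<noteq> G y \<Longrightarrow> y \<in> K"
    and "mu > 0" and "2 * mu + lam > 0" and "\<omega>min < \<omega>max" and "\<tau>1 \<noteq> 0"
    and "z0 \<noteq> z1" and q: "norm q = 1"
    and data_p: "\<forall>xh \<in> S_q q. \<forall>\<omega> \<in> {\<omega>min<..<\<omega>max}. \<forall>\<tau> \<in> {0, \<tau>1}. \<forall>z \<in> {z0, z1}.
      cmod (farfield_pt_p lam mu F z xh q \<omega> \<tau>) = cmod (farfield_pt_p lam mu G z xh q \<omega> \<tau>)"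
    and data_s: "\<forall>xh \<in> S_q_perp q. \<forall>\<omega> \<in> {\<omega>min<..<\<omega>max}. \<forall>\<tau> \<in> {0, \<tau>1}. \<forall>z \<in> {z0, z1}.
      cmod (farfield_pt_s mu F z xh q \<omega> \<tau>) = cmod (farfield_pt_s mu G z xh q \<omega> \<tau>)"
  shows "frame_moment q (\<lambda>y. cdot q (F y - G y)) j k = 0
    \<and> frame_moment q (\<lambda>y. cdot (perp2 q) (F y - G y)) j k = 0"
proof -
  define Z where "Z = {s. (q + s *\<^sub>R perp2 q) \<bullet> (z0 - z1) = 0}"
  have "finite Z"
    unfolding Z_def using q \<open>z0 \<noteq> z1\<close> by (intro finite_frame_directions_orthogonal) auto
  have D: "integrable lborel (\<lambda>y. cdot e (F y - G y))" "\<And>y. cdot e (F y - G y) \<noteq> 0 \<Longrightarrow> y \<in> K" for e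
    using integrable_cdot[OF F] integrable_cdot[OF G] by (auto simp: cdot_diff_right intro!: K(2))
  show ?thesis
  proof (rule frame_moments_zero_if_directional_moments_zero[OF D[of q] D[of "perp2 q"] K(1)])
    show "infinite ({-1..1} - Z)" and "infinite ({-2..-1} - Z)"
      using \<open>finite Z\<close> by (auto intro: Diff_infinite_finite)
    show "(\<integral>y. of_real (((q + s *\<^sub>R perp2 q) \<bullet> y) ^ n)
        * (cdot q (F y - G y) + of_real s * cdot (perp2 q) (F y - G y)) \<partial>lborel) = 0"
      if "s \<in> {-1..1} - Z" for s n
      using p_wave_moments_zero[OF F G K _ _ _ data_p sgn_frame_direction_in_S_q[OF q]] that assms
      by (auto simp: Z_def cdot_add_left cdot_scaleR_left)
    show "(\<integral>y. of_real (((q + s *\<^sub>R perp2 q) \<bullet> y) ^ n)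
        * (cdot (perp2 q) (F y - G y) - of_real s * cdot q (F y - G y)) \<partial>lborel) = 0"
      if "s \<in> {-2..-1} - Z" for s n
      using s_wave_moments_zero[OF F G K _ _ _ data_s sgn_frame_direction_in_S_q_perp[OF q]] that assms
      by (auto simp: Z_def perp2_add perp2_scaleR perp2_perp2 cdot_add_left cdot_scaleR_left
          cdot_diff_left)
  qed
qed

lemma integrable_if_L2_source_in:
  fixes F :: "real^2 \<Rightarrow> complex^2"
  assumes "bounded_domain \<Omega>" and "L2_source_in \<Omega> F"
  shows "integrable lborel (\<lambda>y. F y $ j)"
proof (rule Bochner_Integration.integrable_bound[where f="\<lambda>y. indicator \<Omega> y + (norm (F y $ j))\<^sup>2"])
  have "integrable lborel (indicator \<Omega> :: real^2 \<Rightarrow> real)"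
    using assms(1) emeasure_bounded_finite[of \<Omega>]
    by (intro integrable_real_indicator) (auto simp: bounded_domain_def)
  then show "integrable lborel (\<lambda>y. indicator \<Omega> y + (norm (F y $ j))\<^sup>2)"
    using assms(2) unfolding L2_source_in_def by (intro Bochner_Integration.integrable_add) auto
  have "norm (F y $ j) \<le> 1 + (norm (F y $ j))\<^sup>2" for y
    using sum_squares_bound[of "norm (F y $ j)" 1] zero_le_power2[of "norm (F y $ j)"]
    by (simp only: power_one mult_1_right)
  then show "AE y in lborel. norm (F y $ j) \<le> norm (indicator \<Omega> y + (norm (F y $ j))\<^sup>2)"
    using assms(2) by (auto simp: L2_source_in_def indicator_def)
qed (use assms(2) in \<open>auto simp: L2_source_in_def\<close>)

theorem theorem3p2:
  fixes lam mu \<omega>min \<omega>max :: real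
    and \<Omega> :: "(real^2) set"
    and F G :: "real^2 \<Rightarrow> complex^2"
    and \<tau>1 :: complex
    and z0 z1 q :: "real^2"
  assumes "0 < \<omega>min" and "\<omega>min < \<omega>max"
    and "mu > 0" and "2 * mu + lam > 0"
    and "bounded_domain \<Omega>"
    and "L2_source_in \<Omega> F" and "L2_source_in \<Omega> G"
    and "\<tau>1 \<noteq> 0"
    and "z0 \<noteq> z1" and "z0 \<notin> closure \<Omega>" and "z1 \<notin> closure \<Omega>"
    and "q \<in> unit_circle"
    and "\<forall>xh \<in> S_q q. \<forall>\<omega> \<in> {\<omega>min<..<\<omega>max}. \<forall>\<tau> \<in> {0, \<tau>1}. \<forall>z \<in> {z0, z1}.
           cmod (farfield_pt_p lam mu F z xh q \<omega> \<tau>) = cmod (farfield_pt_p lam mu G z xh q \<omega> \<tau>)"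
    and "\<forall>xh \<in> S_q_perp q. \<forall>\<omega> \<in> {\<omega>min<..<\<omega>max}. \<forall>\<tau> \<in> {0, \<tau>1}. \<forall>z \<in> {z0, z1}.
           cmod (farfield_pt_s mu F z xh q \<omega> \<tau>) = cmod (farfield_pt_s mu G z xh q \<omega> \<tau>)"
  shows "AE y in lborel. F y = G y"
proof -
  have q: "norm q = 1"
    using assms(12) by (simp add: unit_circle_def)
  have K: "compact (closure \<Omega>)"
    using assms(5) by (simp add: bounded_domain_def compact_closure)
  have F: "\<And>j. integrable lborel (\<lambda>y. F y $ j)" and G: "\<And>j. integrable lborel (\<lambda>y. G y $ j)"
    using assms(5-7) by (auto intro: integrable_if_L2_source_in)
  have "y \<in> \<Omega>" if "F y \<noteq> G y" for y
    using that assms(6,7) unfolding L2_source_in_def by metis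
  then have support: "y \<in> closure \<Omega>" if "F y \<noteq> G y" for y
    using that closure_subset by blast
  show ?thesis
  proof (rule AE_eq_if_frame_moments_zero[OF q F G K])
    show "frame_moment q (\<lambda>y. cdot q (F y - G y)) j k = 0
      \<and> frame_moment q (\<lambda>y. cdot (perp2 q) (F y - G y)) j k = 0" for j k
      by (rule frame_moments_zero_if_phaseless_data[OF F G K]) (fact support q assms)+
  qed (fact support)
qed

end
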